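(* Let $(A_n)_{n\ge1}$ be a sequence of matrices with strictly positive entries (of arbitrary sizes, each dimension at least $2$) such that all products $P_n:=A_n A_{n-1}\cdots A_1$ are defined. Let $\alpha_n\ge1$ satisfy $R(A_n)\le\alpha_n$ for all $n$, put $p_n=\sqrt{\alpha_n}$, and define $q_1=p_1$, $q_{n+1}=\Psi(p_{n+1},q_n)$ where $\Psi(p,q)=\frac{1+pq}{p+q}$. Then $\sqrt{R(P_n)}\le q_n$, i.e. $R(P_n)\le q_n^2$, for every $n\ge1$.
   Context: For a matrix $A=(a_{ik})$ of size $d_1\times d_2$ with strictly positive entries, its distortion is $R(A)=\max_{1\le i,j\le d_1,\ 1\le k,\ell\le d_2}\frac{a_{ik}a_{j\ell}}{a_{i\ell}a_{jk}}$. *)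

theory Defs
  imports "Jordan_Normal_Form.Matrix"
begin

definition positive_mat :: "real mat \<Rightarrow> bool" where
  "positive_mat A \<longleftrightarrow> (\<forall>i<dim_row A. \<forall>k<dim_col A. A $$ (i,k) > 0)"

definition distortion :: "real mat \<Rightarrow> real" where
  "distortion A = Max {A $$ (i,k) * A $$ (j,l) / (A $$ (i,l) * A $$ (j,k)) | i j k l.
      i < dim_row A \<and> j < dim_row A \<and> k < dim_col A \<and> l < dim_col A}"

definition Psi :: "real \<Rightarrow> real \<Rightarrow> real" where
  "Psi p q = (1 + p * q) / (p + q)"

text \<open>Products P_n = A_n A_(n-1) ... A_1 (index 0 unused; P 0 = A 1 by convention of prod_seq below
  only matters for n \<ge> 1).\<close>
fun prod_seq :: "(nat \<Rightarrow> real mat) \<Rightarrow> nat \<Rightarrow> real mat" where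
  "prod_seq A 0 = A 1"
| "prod_seq A (Suc 0) = A 1"
| "prod_seq A (Suc (Suc n)) = A (Suc (Suc n)) * prod_seq A (Suc n)"

text \<open>q_1 = p_1, q_(n+1) = Psi(p_(n+1), q_n); q 0 is an unused dummy.\<close>
fun qseq :: "(nat \<Rightarrow> real) \<Rightarrow> nat \<Rightarrow> real" where
  "qseq p 0 = p 1"
| "qseq p (Suc 0) = p 1"
| "qseq p (Suc (Suc n)) = Psi (p (Suc (Suc n))) (qseq p (Suc n))"

end

theory Submission
  imports Defs
begin

text \<open>A cross ratio of \<open>A * B\<close> compares sums \<open>\<Sum>m. x m * u m\<close> of a row of \<open>A\<close>
  against a column of \<open>B\<close>. With weights \<open>w = x u\<close> and ratios \<open>t = y / x\<close>, \<open>s = v / u\<close>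
  it reads \<open>(\<Sum>w) (\<Sum>w t s) / ((\<Sum>w t) (\<Sum>w s))\<close>, where \<open>R(A) \<le> p^2\<close> and \<open>R(B) \<le> q^2\<close>
  confine \<open>t\<close> to some \<open>[a, p^2 a]\<close> and \<open>s\<close> to some \<open>[b, q^2 b]\<close>. The pointwise
  inequalities \<open>(t - a) (q^2 b - s) \<ge> 0\<close> and \<open>(s - b) (p^2 a - t) \<ge> 0\<close> survive averaging
  and leave a two-variable problem whose maximum is \<open>Psi p q ^ 2\<close>. Hence
  \<open>R(A B) \<le> Psi p q ^ 2\<close>, and induction along \<open>P (n + 1) = A (n + 1) * P n\<close> gives the theorem.\<close>

lemma Psi_bound_one_side:
  fixes p q T S :: real
  assumes p: "p \<ge> 1" and q: "q \<ge> 1" and T: "1 \<le> T" and S: "1 \<le> S" "S \<le> q^2"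
    and below: "(q^2 - 1) * (T - 1) \<le> (p^2 - 1) * (S - 1)"
  shows "(p + q)^2 * (q^2 * T + S - q^2) \<le> (1 + p * q)^2 * T * S"
proof -
  define c where "c = (1 + p * q)^2 * S - (p + q)^2 * q^2"
  have gap: "(1 + p * q)^2 * T * S - (p + q)^2 * (q^2 * T + S - q^2)
      = T * c - (p + q)^2 * (S - q^2)"
    unfolding c_def by (simp add: algebra_simps)
  have p2: "p^2 \<ge> 1" and q2: "q^2 \<ge> 1" using p q by (simp_all add: one_le_power)
  \<comment> \<open>The gap is affine in \<open>T\<close>: check it at \<open>T = 1\<close> and at the largest \<open>T\<close>
    allowed by \<open>below\<close>.\<close>
  have "T * c - (p + q)^2 * (S - q^2) \<ge> 0"
  proof (cases "c \<ge> 0")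
    case True
    have at_one: "c - (p + q)^2 * (S - q^2) = (p^2 - 1) * (q^2 - 1) * S"
      unfolding c_def by (simp add: power2_eq_square algebra_simps)
    have "c \<le> T * c" using T True by (simp add: mult_le_cancel_right1)
    moreover have "(p^2 - 1) * (q^2 - 1) * S \<ge> 0" using p2 q2 S by simp
    ultimately show ?thesis using at_one by linarith
  next
    case False
    have "q \<noteq> 1"
    proof
      assume "q = 1"
      with S have "S = 1" by simp
      with \<open>q = 1\<close> have "c = 0" unfolding c_def by (simp add: power2_eq_square algebra_simps)
      with False show False by simp
    qed
    with q have "q^2 - 1 > 0" by (simp add: one_less_power)
    have at_max: "(q^2 - 1 + (p^2 - 1) * (S - 1)) * c + (p + q)^2 * (q^2 - 1) * (q^2 - S)
        = (p^2 - 1) * ((1 + p * q) * S - q * (p + q))^2"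
      unfolding c_def by (simp add: power2_eq_square algebra_simps)
    have "(q^2 - 1 + (p^2 - 1) * (S - 1)) * c \<le> ((q^2 - 1) * T) * c"
      using below False by (intro mult_right_mono_neg) (auto simp: algebra_simps)
    then have "(p^2 - 1) * ((1 + p * q) * S - q * (p + q))^2
        \<le> (q^2 - 1) * (T * c - (p + q)^2 * (S - q^2))"
      using at_max by (simp add: algebra_simps)
    moreover have "(p^2 - 1) * ((1 + p * q) * S - q * (p + q))^2 \<ge> 0" using p2 by simp
    ultimately have "0 \<le> (q^2 - 1) * (T * c - (p + q)^2 * (S - q^2))" by linarith
    with \<open>q^2 - 1 > 0\<close> show ?thesis by (simp add: zero_le_mult_iff)
  qed
  with gap show ?thesis by linarith
qed

lemma Psi_bound:
  fixes p q T S M :: real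
  assumes p: "p \<ge> 1" and q: "q \<ge> 1" and T: "1 \<le> T" "T \<le> p^2" and S: "1 \<le> S" "S \<le> q^2"
    and M: "M \<le> q^2 * T + S - q^2" "M \<le> p^2 * S + T - p^2"
  shows "M \<le> (Psi p q)^2 * T * S"
proof -
  have "(p + q)^2 * M \<le> (1 + p * q)^2 * T * S"
  proof (cases "(q^2 - 1) * (T - 1) \<le> (p^2 - 1) * (S - 1)")
    case True
    have "(p + q)^2 * M \<le> (p + q)^2 * (q^2 * T + S - q^2)" using M(1) by (simp add: mult_left_mono)
    also have "\<dots> \<le> (1 + p * q)^2 * T * S" using Psi_bound_one_side[OF p q T(1) S True] .
    finally show ?thesis .
  next
    case False
    have "(p + q)^2 * M \<le> (q + p)^2 * (p^2 * S + T - p^2)"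
      using M(2) by (simp add: mult_left_mono add.commute)
    also have "\<dots> \<le> (1 + q * p)^2 * S * T" using Psi_bound_one_side[OF q p S(1) T] False by simp
    finally show ?thesis by (simp add: ac_simps)
  qed
  moreover have "p + q > 0" using p q by simp
  ultimately show ?thesis unfolding Psi_def by (simp add: power_divide field_simps)
qed

lemma weighted_Psi_bound:
  fixes p q a b :: real and w t s :: "'a \<Rightarrow> real"
  assumes p: "p \<ge> 1" and q: "q \<ge> 1" and I: "finite I" "I \<noteq> {}" and a: "a > 0" and b: "b > 0"
    and w: "\<And>m. m \<in> I \<Longrightarrow> w m > 0"
    and t: "\<And>m. m \<in> I \<Longrightarrow> a \<le> t m \<and> t m \<le> p^2 * a"
    and s: "\<And>m. m \<in> I \<Longrightarrow> b \<le> s m \<and> s m \<le> q^2 * b"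
  shows "(\<Sum>m\<in>I. w m) * (\<Sum>m\<in>I. w m * t m * s m)
     \<le> (Psi p q)^2 * (\<Sum>m\<in>I. w m * t m) * (\<Sum>m\<in>I. w m * s m)"
proof -
  define W where "W = (\<Sum>m\<in>I. w m)"
  define T where "T = (\<Sum>m\<in>I. w m * t m)"
  define S where "S = (\<Sum>m\<in>I. w m * s m)"
  define M where "M = (\<Sum>m\<in>I. w m * t m * s m)"
  have W: "W > 0" unfolding W_def using I w by (intro sum_pos) auto
  have "0 \<le> (\<Sum>m\<in>I. w m * (t m - a) * (q^2 * b - s m))"
    using w t s by (intro sum_nonneg) (simp add: less_imp_le)
  also have "\<dots> = q^2 * b * T + a * S - a * b * q^2 * W - M"
    unfolding W_def T_def S_def M_def
    by (simp add: algebra_simps sum.distrib sum_subtractf sum_distrib_left sum_distrib_right)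
  finally have M1: "M \<le> q^2 * b * T + a * S - a * b * q^2 * W" by simp
  have "0 \<le> (\<Sum>m\<in>I. w m * (s m - b) * (p^2 * a - t m))"
    using w t s by (intro sum_nonneg) (simp add: less_imp_le)
  also have "\<dots> = p^2 * a * S + b * T - a * b * p^2 * W - M"
    unfolding W_def T_def S_def M_def
    by (simp add: algebra_simps sum.distrib sum_subtractf sum_distrib_left sum_distrib_right)
  finally have M2: "M \<le> p^2 * a * S + b * T - a * b * p^2 * W" by simp
  have T: "a * W \<le> T" "T \<le> p^2 * a * W"
    unfolding W_def T_def sum_distrib_left using w t
    by (auto intro!: sum_mono simp: mult.commute mult.left_commute)
  have S: "b * W \<le> S" "S \<le> q^2 * b * W"
    unfolding W_def S_def sum_distrib_left using w s
    by (auto intro!: sum_mono simp: mult.commute mult.left_commute)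
  have "M / (a * b * W) \<le> (Psi p q)^2 * (T / (a * W)) * (S / (b * W))"
    by (rule Psi_bound[OF p q]) (use W a b T S M1 M2 in \<open>simp_all add: field_simps\<close>)
  then show ?thesis
    using W a b unfolding W_def [symmetric] T_def [symmetric] S_def [symmetric] M_def [symmetric]
    by (simp add: field_simps power2_eq_square)
qed

lemma bilinear_Psi_bound:
  fixes p q :: real and x y u v :: "'a \<Rightarrow> real"
  assumes p: "p \<ge> 1" and q: "q \<ge> 1" and I: "finite I" "I \<noteq> {}"
    and pos: "\<And>m. m \<in> I \<Longrightarrow> x m > 0 \<and> y m > 0 \<and> u m > 0 \<and> v m > 0"
    and xy: "\<And>m n. m \<in> I \<Longrightarrow> n \<in> I \<Longrightarrow> x n * y m \<le> p^2 * (x m * y n)"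
    and uv: "\<And>m n. m \<in> I \<Longrightarrow> n \<in> I \<Longrightarrow> u n * v m \<le> q^2 * (u m * v n)"
  shows "(\<Sum>m\<in>I. x m * u m) * (\<Sum>m\<in>I. y m * v m)
     \<le> (Psi p q)^2 * (\<Sum>m\<in>I. x m * v m) * (\<Sum>m\<in>I. y m * u m)"
proof -
  define t where "t m = y m / x m" for m
  define s where "s m = v m / u m" for m
  obtain m0 where m0: "m0 \<in> I" "\<And>m. m \<in> I \<Longrightarrow> t m0 \<le> t m"
    using arg_min_if_finite[OF I, of t] by (meson not_less)
  obtain n0 where n0: "n0 \<in> I" "\<And>m. m \<in> I \<Longrightarrow> s n0 \<le> s m"
    using arg_min_if_finite[OF I, of s] by (meson not_less)
  have t: "t m0 \<le> t m \<and> t m \<le> p^2 * t m0" if "m \<in> I" for m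
    using m0(2)[OF that] xy[OF that m0(1)] pos[OF that] pos[OF m0(1)]
    by (simp add: t_def field_simps)
  have s: "s n0 \<le> s m \<and> s m \<le> q^2 * s n0" if "m \<in> I" for m
    using n0(2)[OF that] uv[OF that n0(1)] pos[OF that] pos[OF n0(1)]
    by (simp add: s_def field_simps)
  have "(\<Sum>m\<in>I. x m * u m) * (\<Sum>m\<in>I. x m * u m * t m * s m)
     \<le> (Psi p q)^2 * (\<Sum>m\<in>I. x m * u m * t m) * (\<Sum>m\<in>I. x m * u m * s m)"
    using m0(1) n0(1) pos t s
    by (intro weighted_Psi_bound[OF p q I, where a = "t m0" and b = "s n0"])
      (auto simp: t_def s_def)
  moreover have "(\<Sum>m\<in>I. x m * u m * t m * s m) = (\<Sum>m\<in>I. y m * v m)"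
    "(\<Sum>m\<in>I. x m * u m * t m) = (\<Sum>m\<in>I. y m * u m)"
    "(\<Sum>m\<in>I. x m * u m * s m) = (\<Sum>m\<in>I. x m * v m)"
    using pos by (auto intro!: sum.cong simp: t_def s_def less_imp_neq[symmetric])
  ultimately show ?thesis by (simp add: ac_simps)
qed

lemma finite_cross_ratios:
  "finite {A $$ (i,k) * A $$ (j,l) / (A $$ (i,l) * A $$ (j,k)) | i j k l.
      i < dim_row A \<and> j < dim_row A \<and> k < dim_col A \<and> l < dim_col A}"
  by (rule finite_subset[of _ "(\<lambda>(i,j,k,l). A $$ (i,k) * A $$ (j,l) / (A $$ (i,l) * A $$ (j,k)))
      ` ({..<dim_row A} \<times> {..<dim_row A} \<times> {..<dim_col A} \<times> {..<dim_col A})"]) force+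

lemma cross_product_le_distortion:
  assumes "positive_mat A" "distortion A \<le> c"
    and "i < dim_row A" "j < dim_row A" "k < dim_col A" "l < dim_col A"
  shows "A $$ (i,k) * A $$ (j,l) \<le> c * (A $$ (i,l) * A $$ (j,k))"
proof -
  have den: "A $$ (i,l) * A $$ (j,k) > 0" using assms unfolding positive_mat_def by simp
  have "A $$ (i,k) * A $$ (j,l) / (A $$ (i,l) * A $$ (j,k)) \<le> distortion A"
    unfolding distortion_def by (rule Max_ge[OF finite_cross_ratios]) (use assms in blast)
  then have "A $$ (i,k) * A $$ (j,l) \<le> distortion A * (A $$ (i,l) * A $$ (j,k))"
    using den by (simp add: pos_divide_le_eq)
  also have "\<dots> \<le> c * (A $$ (i,l) * A $$ (j,k))"
    using den assms(2) by (simp add: mult_right_mono)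
  finally show ?thesis .
qed

lemma distortion_leI:
  assumes "dim_row A > 0" "dim_col A > 0"
    and "\<And>i j k l. i < dim_row A \<Longrightarrow> j < dim_row A \<Longrightarrow> k < dim_col A \<Longrightarrow> l < dim_col A
       \<Longrightarrow> A $$ (i,k) * A $$ (j,l) / (A $$ (i,l) * A $$ (j,k)) \<le> c"
  shows "distortion A \<le> c"
  unfolding distortion_def using assms by (subst Max_le_iff[OF finite_cross_ratios]) blast+

lemma index_mult_mat_sum:
  assumes "dim_col A = dim_row B" "i < dim_row A" "k < dim_col B"
  shows "(A * B) $$ (i,k) = (\<Sum>m<dim_row B. A $$ (i,m) * B $$ (m,k))"
  using assms by (simp add: scalar_prod_def atLeast0LessThan)

lemma positive_mat_mult:
  assumes "positive_mat A" "positive_mat B" "dim_col A = dim_row B" "dim_row B > 0"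
  shows "positive_mat (A * B)"
  using assms unfolding positive_mat_def
  by (auto simp del: index_mult_mat(1) simp: index_mult_mat_sum intro!: sum_pos)

lemma distortion_mult_le:
  fixes A B :: "real mat"
  assumes A: "positive_mat A" and B: "positive_mat B" and AB: "dim_col A = dim_row B"
    and dims: "dim_row A > 0" "dim_row B > 0" "dim_col B > 0"
    and p: "p \<ge> 1" and q: "q \<ge> 1"
    and RA: "distortion A \<le> p^2" and RB: "distortion B \<le> q^2"
  shows "distortion (A * B) \<le> (Psi p q)^2"
proof (rule distortion_leI)
  show "dim_row (A * B) > 0" "dim_col (A * B) > 0" using dims by simp_all
  fix i j k l
  assume "i < dim_row (A * B)" "j < dim_row (A * B)" "k < dim_col (A * B)" "l < dim_col (A * B)"
  then have ij: "i < dim_row A" "j < dim_row A" and kl: "k < dim_col B" "l < dim_col B" by simp_all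
  let ?I = "{..<dim_row B}"
  have "(\<Sum>m\<in>?I. A $$ (i,m) * B $$ (m,k)) * (\<Sum>m\<in>?I. A $$ (j,m) * B $$ (m,l))
     \<le> (Psi p q)^2 * (\<Sum>m\<in>?I. A $$ (i,m) * B $$ (m,l)) * (\<Sum>m\<in>?I. A $$ (j,m) * B $$ (m,k))"
  proof (rule bilinear_Psi_bound[OF p q])
    show "finite ?I" "?I \<noteq> {}" using dims by auto
    show "\<And>m. m \<in> ?I \<Longrightarrow>
        A $$ (i,m) > 0 \<and> A $$ (j,m) > 0 \<and> B $$ (m,k) > 0 \<and> B $$ (m,l) > 0"
      using A B AB ij kl unfolding positive_mat_def by auto
    show "\<And>m n. m \<in> ?I \<Longrightarrow> n \<in> ?I \<Longrightarrow>
        A $$ (i,n) * A $$ (j,m) \<le> p^2 * (A $$ (i,m) * A $$ (j,n))"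
      using cross_product_le_distortion[OF A RA] ij AB by simp
    show "\<And>m n. m \<in> ?I \<Longrightarrow> n \<in> ?I \<Longrightarrow>
        B $$ (n,k) * B $$ (m,l) \<le> q^2 * (B $$ (m,k) * B $$ (n,l))"
      using cross_product_le_distortion[OF B RB] kl by (simp add: mult.commute)
  qed
  moreover have "(A * B) $$ (i,l) * (A * B) $$ (j,k) > 0"
    using positive_mat_mult[OF A B AB dims(2)] ij kl unfolding positive_mat_def by simp
  ultimately show "(A * B) $$ (i,k) * (A * B) $$ (j,l) / ((A * B) $$ (i,l) * (A * B) $$ (j,k))
      \<le> (Psi p q)^2"
    using AB ij kl
    by (simp del: index_mult_mat(1) add: index_mult_mat_sum pos_divide_le_eq mult.assoc)
qed

lemma Psi_ge_1:
  fixes p q :: real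
  assumes "p \<ge> 1" "q \<ge> 1"
  shows "Psi p q \<ge> 1"
proof -
  have "(p - 1) * (q - 1) \<ge> 0" using assms by simp
  then show ?thesis using assms unfolding Psi_def by (simp add: algebra_simps)
qed

lemma qseq_ge_1:
  assumes "\<And>n. n \<ge> 1 \<Longrightarrow> p n \<ge> 1"
  shows "qseq p n \<ge> 1"
  using assms by (induction p n rule: qseq.induct) (simp_all add: Psi_ge_1)

lemma dim_prod_seq:
  "dim_row (prod_seq A (Suc n)) = dim_row (A (Suc n))"
  "dim_col (prod_seq A n) = dim_col (A 1)"
  by (induction A n rule: prod_seq.induct) simp_all

lemma positive_mat_prod_seq:
  assumes pos: "\<And>n. n \<ge> 1 \<Longrightarrow> positive_mat (A n)"
    and rows: "\<And>n. n \<ge> 1 \<Longrightarrow> dim_row (A n) > 0"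
    and chain: "\<And>n. n \<ge> 1 \<Longrightarrow> dim_col (A (Suc n)) = dim_row (A n)"
  shows "positive_mat (prod_seq A (Suc n))"
proof (induction n)
  case 0
  then show ?case using pos by simp
next
  case (Suc n)
  then show ?case
    using positive_mat_mult pos rows chain dim_prod_seq(1) by simp
qed

lemma distortion_prod_seq_le:
  assumes pos: "\<And>n. n \<ge> 1 \<Longrightarrow> positive_mat (A n)"
    and rows: "\<And>n. n \<ge> 1 \<Longrightarrow> dim_row (A n) > 0"
    and cols: "\<And>n. n \<ge> 1 \<Longrightarrow> dim_col (A n) > 0"
    and chain: "\<And>n. n \<ge> 1 \<Longrightarrow> dim_col (A (Suc n)) = dim_row (A n)"
    and p: "\<And>n. n \<ge> 1 \<Longrightarrow> p n \<ge> 1"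
    and R: "\<And>n. n \<ge> 1 \<Longrightarrow> distortion (A n) \<le> (p n)^2"
  shows "distortion (prod_seq A (Suc n)) \<le> (qseq p (Suc n))^2"
proof (induction n)
  case 0
  then show ?case using R by simp
next
  case (Suc n)
  have "distortion (A (Suc (Suc n)) * prod_seq A (Suc n))
      \<le> (Psi (p (Suc (Suc n))) (qseq p (Suc n)))^2"
  proof (rule distortion_mult_le)
    show "positive_mat (A (Suc (Suc n)))" "positive_mat (prod_seq A (Suc n))"
      using pos positive_mat_prod_seq[where A = A, OF pos rows chain] by simp_all
    show "dim_col (A (Suc (Suc n))) = dim_row (prod_seq A (Suc n))"
      using chain dim_prod_seq(1) by simp
    show "dim_row (A (Suc (Suc n))) > 0" "dim_row (prod_seq A (Suc n)) > 0"
      "dim_col (prod_seq A (Suc n)) > 0"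
      using rows cols dim_prod_seq by simp_all
    show "p (Suc (Suc n)) \<ge> 1" "qseq p (Suc n) \<ge> 1" using p qseq_ge_1[of p, OF p] by simp_all
    show "distortion (A (Suc (Suc n))) \<le> (p (Suc (Suc n)))^2" using R by simp
    show "distortion (prod_seq A (Suc n)) \<le> (qseq p (Suc n))^2" by (rule Suc.IH)
  qed
  then show ?case by simp
qed

theorem mainTheorem10:
  fixes A :: "nat \<Rightarrow> real mat" and alpha :: "nat \<Rightarrow> real"
  assumes pos: "\<And>n. n \<ge> 1 \<Longrightarrow> positive_mat (A n)"
    and rows: "\<And>n. n \<ge> 1 \<Longrightarrow> dim_row (A n) \<ge> 2"
    and cols: "\<And>n. n \<ge> 1 \<Longrightarrow> dim_col (A n) \<ge> 2"
    and chain: "\<And>n. n \<ge> 1 \<Longrightarrow> dim_col (A (Suc n)) = dim_row (A n)"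
    and alpha_ge: "\<And>n. n \<ge> 1 \<Longrightarrow> alpha n \<ge> 1"
    and R_le: "\<And>n. n \<ge> 1 \<Longrightarrow> distortion (A n) \<le> alpha n"
    and n: "n \<ge> 1"
  shows "sqrt (distortion (prod_seq A n)) \<le> qseq (\<lambda>k. sqrt (alpha k)) n"
proof -
  define p where "p k = sqrt (alpha k)" for k
  have p_ge: "p k \<ge> 1" if "k \<ge> 1" for k using alpha_ge[OF that] by (simp add: p_def)
  have R_p: "distortion (A k) \<le> (p k)^2" if "k \<ge> 1" for k
    using alpha_ge[OF that] R_le[OF that] by (simp add: p_def)
  obtain m where m: "n = Suc m" using n by (cases n) auto
  have "distortion (prod_seq A n) \<le> (qseq p n)^2"
    unfolding m
    by (rule distortion_prod_seq_le[where A = A and p = p, OF pos _ _ chain p_ge R_p])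
      (use rows cols in fastforce)+
  then have "sqrt (distortion (prod_seq A n)) \<le> sqrt ((qseq p n)^2)" by (rule real_sqrt_le_mono)
  also have "\<dots> = qseq p n" using qseq_ge_1[of p n, OF p_ge] by simp
  finally show ?thesis unfolding p_def .
qed

end
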